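(* Let $\mathcal{C}_2=\mathbb{C}\{e_1,e_2\}$ be the complex algebra with basis $1,e_1,e_2,e_{12}=e_1e_2$, where $e_1^2=e_2^2=-1$ and $e_1e_2=-e_2e_1$. Let $A\in\mathcal{C}_2^{m\times n}$ be written as $A=A_0+A_1e_1+A_2e_2+A_3e_{12}$ with $A_0,\dots,A_3\in\mathbb{C}^{m\times n}$. For a positive integer $t$ let $$K_{2t}=\frac12\begin{pmatrix}(1-ie_1)I_t & (e_2+ie_{12})I_t\\ (-e_2+ie_{12})I_t & (1+ie_1)I_t\end{pmatrix}.$$ Then $K_{2t}$ is invertible with $K_{2t}^{-1}=K_{2t}$, and $$K_{2m}\begin{pmatrix}A&0\\0&A\end{pmatrix}K_{2n}^{-1}=\begin{pmatrix}A_0+A_1i & -(A_2+A_3i)\\ A_2-A_3i & A_0-A_1i\end{pmatrix}.$$ In particular, if $m=n$ this is a similarity over $\mathcal{C}_2$.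
   Context: $i$ is the imaginary unit of $\mathbb{C}$, commuting with all elements of $\mathcal{C}_2$; $I_t$ is the $t\times t$ identity matrix. *)

theory Defs
  imports Complex_Main "Jordan_Normal_Form.Matrix"
begin

text \<open>The complex Clifford algebra C_2 = C{e1,e2}: elements a0 + a1 e1 + a2 e2 + a3 e12
  with complex coefficients, e1^2 = e2^2 = -1, e1 e2 = - e2 e1 = e12.\<close>

datatype C2 = C2 (cl0: complex) (cl1: complex) (cl2: complex) (cl3: complex)

instantiation C2 :: ring_1
begin
definition "0 = C2 0 0 0 0"
definition "1 = C2 1 0 0 0"
definition "x + y = C2 (cl0 x + cl0 y) (cl1 x + cl1 y) (cl2 x + cl2 y) (cl3 x + cl3 y)"
definition "x - y = C2 (cl0 x - cl0 y) (cl1 x - cl1 y) (cl2 x - cl2 y) (cl3 x - cl3 y)"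
definition "- x = C2 (- cl0 x) (- cl1 x) (- cl2 x) (- cl3 x)"
definition "x * y = C2
   (cl0 x * cl0 y - cl1 x * cl1 y - cl2 x * cl2 y - cl3 x * cl3 y)
   (cl0 x * cl1 y + cl1 x * cl0 y + cl2 x * cl3 y - cl3 x * cl2 y)
   (cl0 x * cl2 y + cl2 x * cl0 y + cl3 x * cl1 y - cl1 x * cl3 y)
   (cl0 x * cl3 y + cl3 x * cl0 y + cl1 x * cl2 y - cl2 x * cl1 y)"
instance
  by standard (auto simp: zero_C2_def one_C2_def plus_C2_def minus_C2_def uminus_C2_def
      times_C2_def algebra_simps intro: C2.expand)
end

definition e1 :: C2 where "e1 = C2 0 1 0 0"
definition e2 :: C2 where "e2 = C2 0 0 1 0"
definition e12 :: C2 where "e12 = C2 0 0 0 1"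
definition of_cpx :: "complex \<Rightarrow> C2" where "of_cpx z = C2 z 0 0 0"

definition K :: "nat \<Rightarrow> C2 mat" where
  "K t = four_block_mat
     ((of_cpx (1/2) * (1 - of_cpx \<i> * e1)) \<cdot>\<^sub>m 1\<^sub>m t)
     ((of_cpx (1/2) * (e2 + of_cpx \<i> * e12)) \<cdot>\<^sub>m 1\<^sub>m t)
     ((of_cpx (1/2) * (- e2 + of_cpx \<i> * e12)) \<cdot>\<^sub>m 1\<^sub>m t)
     ((of_cpx (1/2) * (1 + of_cpx \<i> * e1)) \<cdot>\<^sub>m 1\<^sub>m t)"

end

theory Submission
  imports Defs
begin

text \<open>K_{2t} is the Kronecker product of a 2 \<times> 2 matrix k over C_2 with I_t, so block
  multiplication reduces both claims to identities in C_2: k^2 = 1, and conjugating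
  x = x0 + x1 e1 + x2 e2 + x3 e12 by k yields the complex 2 \<times> 2 matrix
  [[x0 + i x1, -(x2 + i x3)], [x2 - i x3, x0 - i x1]], i.e. k realises the isomorphism of
  C_2 with the complex 2 \<times> 2 matrices.\<close>

lemma smult_one_mat_mult:
  assumes "B \<in> carrier_mat m n"
  shows "(c \<cdot>\<^sub>m 1\<^sub>m m) * B = c \<cdot>\<^sub>m (B :: 'a :: semiring_1 mat)"
proof (rule eq_matI)
  fix i j assume ij: "i < dim_row (c \<cdot>\<^sub>m B)" "j < dim_col (c \<cdot>\<^sub>m B)"
  have "((c \<cdot>\<^sub>m 1\<^sub>m m) * B) $$ (i,j) = (\<Sum>k\<in>{0..<m}. (if i = k then c else 0) * B $$ (k,j))"
    using ij assms by (auto simp: scalar_prod_def intro!: sum.cong)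
  also have "\<dots> = (\<Sum>k\<in>{0..<m}. if i = k then c * B $$ (k,j) else 0)"
    by (rule sum.cong) auto
  also have "\<dots> = (c \<cdot>\<^sub>m B) $$ (i,j)" using ij assms by simp
  finally show "((c \<cdot>\<^sub>m 1\<^sub>m m) * B) $$ (i,j) = (c \<cdot>\<^sub>m B) $$ (i,j)" .
qed (use assms in auto)

lemma mult_smult_one_mat:
  assumes "B \<in> carrier_mat m n"
  shows "B * (c \<cdot>\<^sub>m 1\<^sub>m n) = map_mat (\<lambda>x. x * c) (B :: 'a :: semiring_1 mat)"
proof (rule eq_matI)
  fix i j assume ij: "i < dim_row (map_mat (\<lambda>x. x * c) B)" "j < dim_col (map_mat (\<lambda>x. x * c) B)"
  have "(B * (c \<cdot>\<^sub>m 1\<^sub>m n)) $$ (i,j) = (\<Sum>k\<in>{0..<n}. B $$ (i,k) * (if k = j then c else 0))"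
    using ij assms by (auto simp: scalar_prod_def intro!: sum.cong)
  also have "\<dots> = (\<Sum>k\<in>{0..<n}. if j = k then B $$ (i,k) * c else 0)"
    by (rule sum.cong) auto
  also have "\<dots> = map_mat (\<lambda>x. x * c) B $$ (i,j)" using ij assms by simp
  finally show "(B * (c \<cdot>\<^sub>m 1\<^sub>m n)) $$ (i,j) = map_mat (\<lambda>x. x * c) B $$ (i,j)" .
qed (use assms in auto)

lemma involution_mat_invertible:
  assumes "M \<in> carrier_mat n n" and "M * M = 1\<^sub>m n"
  shows "invertible_mat M \<and> inverts_mat M M"
  using assms unfolding invertible_mat_def inverts_mat_def by auto

definition scalar_block_mat :: "'a :: semiring_1 \<Rightarrow> 'a \<Rightarrow> 'a \<Rightarrow> 'a \<Rightarrow> nat \<Rightarrow> 'a mat" where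
  "scalar_block_mat a b c d t =
     four_block_mat (a \<cdot>\<^sub>m 1\<^sub>m t) (b \<cdot>\<^sub>m 1\<^sub>m t) (c \<cdot>\<^sub>m 1\<^sub>m t) (d \<cdot>\<^sub>m 1\<^sub>m t)"

lemma scalar_block_mat_carrier: "scalar_block_mat a b c d t \<in> carrier_mat (2 * t) (2 * t)"
  unfolding scalar_block_mat_def
  by (metis four_block_carrier_mat mult_2 one_carrier_mat smult_carrier_mat)

lemma scalar_block_mat_one: "scalar_block_mat 1 0 0 1 t = 1\<^sub>m (2 * t)"
  unfolding scalar_block_mat_def mult_2 by (rule eq_matI) auto

lemma scalar_block_mat_mult:
  "scalar_block_mat a b c d t * scalar_block_mat a' b' c' d' t
   = scalar_block_mat (a * a' + b * c') (a * b' + b * d') (c * a' + d * c') (c * b' + d * d') t"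
proof -
  have mult: "(x \<cdot>\<^sub>m 1\<^sub>m t) * (y \<cdot>\<^sub>m 1\<^sub>m t) = (x * y) \<cdot>\<^sub>m 1\<^sub>m t" for x y :: 'a
    by (subst smult_one_mat_mult[of _ t t]) (auto intro!: eq_matI simp: mult.assoc)
  have add: "x \<cdot>\<^sub>m 1\<^sub>m t + y \<cdot>\<^sub>m 1\<^sub>m t = (x + y) \<cdot>\<^sub>m 1\<^sub>m t" for x y :: 'a
    by (rule add_smult_distrib_right_mat[symmetric, of _ t t]) simp
  show ?thesis
    unfolding scalar_block_mat_def
    by (subst mult_four_block_mat[where ?nr1.0=t and ?n1.0=t and ?n2.0=t and ?nr2.0=t
          and ?nc1.0=t and ?nc2.0=t])
      (auto simp: mult add)
qed

lemma scalar_block_mat_sandwich: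
  assumes "A \<in> carrier_mat m n"
  shows "scalar_block_mat a b c d m * four_block_mat A (0\<^sub>m m n) (0\<^sub>m m n) A
      * scalar_block_mat a' b' c' d' n
    = four_block_mat
        (map_mat (\<lambda>x. a * x * a' + b * x * c') A) (map_mat (\<lambda>x. a * x * b' + b * x * d') A)
        (map_mat (\<lambda>x. c * x * a' + d * x * c') A) (map_mat (\<lambda>x. c * x * b' + d * x * d') A)"
proof -
  have left: "scalar_block_mat a b c d m * four_block_mat A (0\<^sub>m m n) (0\<^sub>m m n) A
     = four_block_mat (a \<cdot>\<^sub>m A) (b \<cdot>\<^sub>m A) (c \<cdot>\<^sub>m A) (d \<cdot>\<^sub>m A)"
    unfolding scalar_block_mat_def using assms
    by (subst mult_four_block_mat[where ?nr1.0=m and ?n1.0=m and ?n2.0=m and ?nr2.0=m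
          and ?nc1.0=n and ?nc2.0=n])
      (auto simp: smult_one_mat_mult[OF assms])
  show ?thesis
    unfolding left unfolding scalar_block_mat_def using assms
    by (subst mult_four_block_mat[where ?nr1.0=m and ?n1.0=n and ?n2.0=n and ?nr2.0=m
          and ?nc1.0=n and ?nc2.0=n])
      (auto intro!: eq_matI simp: mult_smult_one_mat[of _ m n] mult.assoc)
qed

lemma C2_eq_iff: "x = y \<longleftrightarrow> cl0 x = cl0 y \<and> cl1 x = cl1 y \<and> cl2 x = cl2 y \<and> cl3 x = cl3 y"
  by (cases x; cases y) auto

lemmas C2_arith_defs = zero_C2_def one_C2_def plus_C2_def minus_C2_def uminus_C2_def
  times_C2_def e1_def e2_def e12_def of_cpx_def

lemma C2_of_components: "of_cpx a + of_cpx b * e1 + of_cpx c * e2 + of_cpx d * e12 = C2 a b c d"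
  by (simp add: C2_arith_defs)

definition K11 :: C2 where "K11 = of_cpx (1/2) * (1 - of_cpx \<i> * e1)"
definition K12 :: C2 where "K12 = of_cpx (1/2) * (e2 + of_cpx \<i> * e12)"
definition K21 :: C2 where "K21 = of_cpx (1/2) * (- e2 + of_cpx \<i> * e12)"
definition K22 :: C2 where "K22 = of_cpx (1/2) * (1 + of_cpx \<i> * e1)"

lemma K_eq_scalar_block_mat: "K t = scalar_block_mat K11 K12 K21 K22 t"
  unfolding K_def scalar_block_mat_def K11_def K12_def K21_def K22_def ..

lemma K_blocks_square:
  "K11 * K11 + K12 * K21 = 1" "K11 * K12 + K12 * K22 = 0"
  "K21 * K11 + K22 * K21 = 0" "K21 * K12 + K22 * K22 = 1"
  unfolding K11_def K12_def K21_def K22_def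
  by (simp_all add: C2_arith_defs algebra_simps; simp add: complex_eq_iff)+

lemma K_mult_K: "K t * K t = 1\<^sub>m (2 * t)"
  unfolding K_eq_scalar_block_mat scalar_block_mat_mult K_blocks_square scalar_block_mat_one ..

lemma K_blocks_conjugate:
  "K11 * x * K11 + K12 * x * K21 = of_cpx (cl0 x + \<i> * cl1 x)"
  "K11 * x * K12 + K12 * x * K22 = of_cpx (- (cl2 x + \<i> * cl3 x))"
  "K21 * x * K11 + K22 * x * K21 = of_cpx (cl2 x - \<i> * cl3 x)"
  "K21 * x * K12 + K22 * x * K22 = of_cpx (cl0 x - \<i> * cl1 x)"
  unfolding K11_def K12_def K21_def K22_def
  by (simp_all add: C2_eq_iff C2_arith_defs algebra_simps complex_eq_iff; simp add: field_simps)+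

theorem theorem10:
  fixes m n :: nat and A :: "C2 mat" and A0 A1 A2 A3 :: "complex mat"
  assumes "m > 0" and "n > 0"
    and "A0 \<in> carrier_mat m n" and "A1 \<in> carrier_mat m n"
    and "A2 \<in> carrier_mat m n" and "A3 \<in> carrier_mat m n"
    and "A = map_mat of_cpx A0 + map_mat (\<lambda>z. of_cpx z * e1) A1
           + map_mat (\<lambda>z. of_cpx z * e2) A2 + map_mat (\<lambda>z. of_cpx z * e12) A3"
  shows "(\<forall>t>0. invertible_mat (K t) \<and> inverts_mat (K t) (K t))
    \<and> K m * four_block_mat A (0\<^sub>m m n) (0\<^sub>m m n) A * K n
      = map_mat of_cpx (four_block_mat (A0 + \<i> \<cdot>\<^sub>m A1) (- (A2 + \<i> \<cdot>\<^sub>m A3))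
                                       (A2 - \<i> \<cdot>\<^sub>m A3) (A0 - \<i> \<cdot>\<^sub>m A1))"
proof -
  have A: "A \<in> carrier_mat m n" using assms(3-7) by simp
  have A_entry: "A $$ (i, j) = C2 (A0 $$ (i, j)) (A1 $$ (i, j)) (A2 $$ (i, j)) (A3 $$ (i, j))"
    if "i < m" "j < n" for i j
    using that assms(3-7) by (simp flip: C2_of_components)
  have "invertible_mat (K t) \<and> inverts_mat (K t) (K t)" for t
    using scalar_block_mat_carrier K_mult_K
    unfolding K_eq_scalar_block_mat by (rule involution_mat_invertible)
  moreover have "K m * four_block_mat A (0\<^sub>m m n) (0\<^sub>m m n) A * K n
      = map_mat of_cpx (four_block_mat (A0 + \<i> \<cdot>\<^sub>m A1) (- (A2 + \<i> \<cdot>\<^sub>m A3))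
                                       (A2 - \<i> \<cdot>\<^sub>m A3) (A0 - \<i> \<cdot>\<^sub>m A1))"
    unfolding K_eq_scalar_block_mat scalar_block_mat_sandwich[OF A]
    using A assms(3-6) by (intro eq_matI) (auto simp: K_blocks_conjugate A_entry)
  ultimately show ?thesis by blast
qed

end
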